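(* Let $\gamma = \lim_{n\to\infty}\left(1 + \frac{1}{2} + \cdots + \frac{1}{n} - \ln n\right)$ be Euler's constant. Then $$e^{\gamma} = \prod_{n=1}^{\infty} \left( \prod_{k=0}^{n} (k+1)^{(-1)^{k+1}\binom{n}{k}} \right)^{1/(n+1)} = \left(\frac{2}{1}\right)^{1/2}\left(\frac{2^2}{1\cdot 3}\right)^{1/3}\left(\frac{2^3\cdot 4}{1\cdot 3^3}\right)^{1/4}\left(\frac{2^4\cdot 4^4}{1\cdot 3^6\cdot 5}\right)^{1/5}\cdots,$$ where the infinite product converges, i.e. its $N$th partial product tends to $e^\gamma$ as $N\to\infty$. Equivalently, $$\gamma = \sum_{n=1}^{\infty} \frac{1}{n+1} \sum_{k=0}^{n} (-1)^{k+1}\binom{n}{k} \ln(k+1).$$ *)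

theory Defs
  imports "HOL-Analysis.Analysis"
begin

end

theory Submission
  imports Defs
begin

(*
  Euler's constant is the integral over (0,1) of 1/(1 - x) - 1/(-ln x). Against the weight
  1 - x^N the two terms integrate to the harmonic number H_N and to ln (N + 1), because the
  integral of (1 - x^s)/(-ln x) is ln (1 + s): its derivative in s is the integral of x^s,
  i.e. 1/(s + 1). (After x = exp (-t) this is a Frullani integral.)
  With u = 1 - x and -ln x = sum of u^n/n, the integrand expands into the nonnegative series
  sum over n >= 1 of u^n / ((n + 1) (-ln x)), which may be integrated termwise; expanding
  u^n = (1 - x)^n binomially, the n-th term integrates to
  (1/(n + 1)) sum_k (-1)^(k+1) (n choose k) ln (k + 1). Exponentiating the series gives the product.
*)

lemma has_integral_sums_nonneg:
  fixes f :: "nat \<Rightarrow> 'a::euclidean_space \<Rightarrow> real"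
  assumes f_int: "\<And>n. (f n has_integral a n) S"
    and f_nonneg: "\<And>n x. x \<in> S \<Longrightarrow> 0 \<le> f n x"
    and f_sums: "\<And>x. x \<in> S \<Longrightarrow> (\<lambda>n. f n x) sums g x"
    and g_int: "(g has_integral I) S"
  shows "a sums I"
proof -
  define F where "F N x = (\<Sum>n<N. f n x)" for N x
  have F_int: "(F N has_integral (\<Sum>n<N. a n)) S" for N
    unfolding F_def by (intro has_integral_sum f_int) auto
  have F_le: "F N x \<le> g x" if "x \<in> S" for N x
    using f_sums[OF that] f_nonneg[OF that] sum_le_suminf[of "\<lambda>n. f n x" "{..<N}"]
    unfolding F_def sums_iff by simp
  have "(\<lambda>N. integral S (F N)) \<longlonglongrightarrow> integral S g"
  proof (rule monotone_convergence_increasing[THEN conjunct2])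
    show "F N integrable_on S" for N using F_int by blast
    show "F N x \<le> F (Suc N) x" if "x \<in> S" for N x
      unfolding F_def using f_nonneg[OF that] by simp
    show "(\<lambda>N. F N x) \<longlonglongrightarrow> g x" if "x \<in> S" for x
      using f_sums[OF that] unfolding F_def sums_def .
    have "\<bar>integral S (F N)\<bar> \<le> integral S g" for N
    proof -
      have "0 \<le> integral S (F N)"
        using F_int f_nonneg unfolding F_def by (intro integral_nonneg sum_nonneg) auto
      moreover have "integral S (F N) \<le> integral S g"
        using F_int F_le g_int by (intro integral_le) auto
      ultimately show ?thesis by simp
    qed
    then show "bounded (range (\<lambda>N. integral S (F N)))"
      by (intro boundedI) auto
  qed
  then show ?thesis
    using F_int[THEN integral_unique] g_int[THEN integral_unique] unfolding sums_def by simp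
qed

definition frullani_kernel :: "real \<Rightarrow> real \<Rightarrow> real" where
  "frullani_kernel s x = (if x = 1 then s else (1 - x powr s) / (- ln x))"
  \<comment> \<open>the value s at x = 1 is the continuous extension; it makes the kernel differentiable in s there\<close>

lemma frullani_kernel_bounds:
  assumes "0 \<le> x" "x \<le> 1" "0 \<le> s"
  shows "0 \<le> frullani_kernel s x \<and> frullani_kernel s x \<le> s"
proof (cases "x = 0 \<or> x = 1")
  case True
  then show ?thesis using assms by (auto simp: frullani_kernel_def)
next
  case False
  then have x: "0 < x" "x < 1" using assms by auto
  have neg_ln: "0 < - ln x" using x by simp
  have powr_eq: "x powr s = exp (s * ln x)" using x by (simp add: powr_def)
  have "s * ln x \<le> 0" using neg_ln assms(3) by (simp add: mult_nonneg_nonpos)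
  then have "x powr s \<le> 1" using powr_eq by simp
  moreover have "1 - x powr s \<le> s * (- ln x)"
    using powr_eq exp_ge_add_one_self[of "s * ln x"] by linarith
  ultimately have "0 \<le> (1 - x powr s) / (- ln x) \<and> (1 - x powr s) / (- ln x) \<le> s"
    using neg_ln by (auto simp only: pos_divide_le_eq intro: divide_nonneg_pos)
  then show ?thesis
    using x by (simp add: frullani_kernel_def)
qed

lemma frullani_kernel_integrable:
  assumes "0 \<le> s"
  shows "frullani_kernel s integrable_on {0..1}"
proof -
  have "continuous_on {0<..<1::real} (\<lambda>x. (1 - x powr s) / (- ln x))"
    by (intro continuous_intros) auto
  then have cont: "continuous_on {0<..<1::real} (frullani_kernel s)"
    by (rule continuous_on_eq) (auto simp: frullani_kernel_def)
  have "frullani_kernel s integrable_on {0<..<1}"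
  proof (rule measurable_bounded_by_integrable_imp_integrable_real[where g="\<lambda>_. s"])
    show "frullani_kernel s \<in> borel_measurable (lebesgue_on {0<..<1})"
      by (rule continuous_imp_measurable_on_sets_lebesgue[OF cont]) auto
    show "(\<lambda>_. s) integrable_on {0<..<1::real}"
      by (rule integrable_on_Icc_iff_Ioo[THEN iffD1, OF integrable_const_ivl])
    show "\<bar>frullani_kernel s x\<bar> \<le> s" if "x \<in> {0<..<1}" for x
      using frullani_kernel_bounds[of x s] that assms by auto
  qed auto
  then show ?thesis by (simp add: integrable_on_Icc_iff_Ioo)
qed

lemma has_field_derivative_frullani_kernel:
  assumes "0 \<le> x" "x \<le> 1"
  shows "((\<lambda>s. frullani_kernel s x) has_field_derivative x powr s) (at s within S)"
proof -
  consider "x = 0" | "x = 1" | "0 < x" "x < 1" using assms by fastforce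
  then show ?thesis
  proof cases
    case 1
    then show ?thesis by (simp add: frullani_kernel_def)
  next
    case 2
    then show ?thesis by (auto simp: frullani_kernel_def intro!: derivative_eq_intros)
  next
    case 3
    then have "(\<lambda>s. frullani_kernel s x) = (\<lambda>s. (1 - exp (s * ln x)) / (- ln x))"
      by (auto simp: frullani_kernel_def powr_def)
    moreover have "((\<lambda>s. (1 - exp (s * ln x)) / (- ln x)) has_field_derivative exp (s * ln x))
        (at s within S)"
      using 3 by (auto intro!: derivative_eq_intros simp: field_simps)
    ultimately show ?thesis using 3 by (simp add: powr_def)
  qed
qed

lemma has_field_derivative_integral_frullani_kernel:
  assumes "0 < t"
  shows "((\<lambda>s. integral {0..1} (frullani_kernel s)) has_field_derivative 1 / (t + 1))
           (at t within {0<..})"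
proof -
  have "((\<lambda>s. integral (cbox 0 1) (frullani_kernel s)) has_field_derivative
          integral (cbox 0 1) (\<lambda>x. x powr t)) (at t within {0<..})"
  proof (rule leibniz_rule_field_derivative)
    show "((\<lambda>s. frullani_kernel s x) has_field_derivative x powr s) (at s within {0<..})"
      if "x \<in> cbox 0 1" for s x
      using has_field_derivative_frullani_kernel that by auto
    show "frullani_kernel s integrable_on cbox 0 1" if "s \<in> {0<..}" for s
      using frullani_kernel_integrable[of s] that by simp
    have "continuous_on ({0<..} \<times> cbox 0 1) (\<lambda>p::real \<times> real. snd p powr fst p)"
      by (rule continuous_on_powr') (auto intro: continuous_intros)
    then show "continuous_on ({0<..} \<times> cbox 0 1) (\<lambda>(s, x::real). x powr s)"
      by (simp add: case_prod_unfold)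
  qed (use assms in auto)
  moreover have "integral (cbox 0 1) (\<lambda>x. x powr t) = 1 / (t + 1)"
    using has_integral_powr_from_0[of t 1] assms by (auto intro!: integral_unique)
  ultimately show ?thesis by simp
qed

lemma integral_frullani_kernel_bounds:
  assumes "0 \<le> s"
  shows "0 \<le> integral {0..1} (frullani_kernel s) \<and> integral {0..1} (frullani_kernel s) \<le> s"
proof
  show "0 \<le> integral {0..1} (frullani_kernel s)"
    by (rule integral_nonneg) (use frullani_kernel_integrable frullani_kernel_bounds assms in auto)
  have "integral {0..1} (frullani_kernel s) \<le> integral {0..1} (\<lambda>_::real. s)"
    by (rule integral_le)
      (use frullani_kernel_integrable frullani_kernel_bounds assms in \<open>auto intro: integrable_const_ivl\<close>)
  then show "integral {0..1} (frullani_kernel s) \<le> s" by simp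
qed

lemma integral_frullani_kernel:
  assumes "0 < s"
  shows "integral {0..1} (frullani_kernel s) = ln (1 + s)"
proof -
  define G where "G t = integral {0..1} (frullani_kernel t) - ln (1 + t)" for t
  have "(G has_field_derivative 0) (at t within {0<..})" if "t \<in> {0<..}" for t
    using has_field_derivative_integral_frullani_kernel[of t] that unfolding G_def
    by (auto intro!: derivative_eq_intros simp: field_simps)
  then obtain c where c: "\<And>t. 0 < t \<Longrightarrow> G t = c"
    using has_field_derivative_zero_constant[of "{0<..}" G] by auto
  \<comment> \<open>both terms of G t lie in [0, t], so the constant is squeezed to 0 as t tends to 0\<close>
  have "\<bar>c\<bar> \<le> 0 + e" if "0 < e" for e
  proof -
    have "ln (1 + e/2) \<le> e/2" "0 \<le> ln (1 + e/2)"
      using that ln_add_one_self_le_self[of "e/2"] by auto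
    then show ?thesis
      using c[of "e/2"] integral_frullani_kernel_bounds[of "e/2"] that
      unfolding G_def abs_le_iff by linarith
  qed
  then have "c = 0" using field_le_epsilon[of "\<bar>c\<bar>" 0] by simp
  then show ?thesis using c[OF assms] unfolding G_def by simp
qed

lemma has_integral_one_minus_power_div_ln:
  "((\<lambda>x. (1 - x ^ k) / (- ln x)) has_integral ln (real k + 1)) {0<..<1::real}"
proof (cases "k = 0")
  case True
  then show ?thesis by simp
next
  case False
  then have "(frullani_kernel (real k) has_integral ln (1 + real k)) {0..1}"
    using frullani_kernel_integrable[of "real k"] integral_frullani_kernel[of "real k"]
    by (simp add: has_integral_integral)
  then have "(frullani_kernel (real k) has_integral ln (real k + 1)) {0<..<1}"
    by (simp add: has_integral_Icc_iff_Ioo add.commute)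
  then show ?thesis
    by (rule has_integral_eq[rotated]) (auto simp: frullani_kernel_def powr_realpow)
qed

definition euler_integrand :: "real \<Rightarrow> real" where
  "euler_integrand x = 1 / (1 - x) - 1 / (- ln x)"

lemma euler_integrand_nonneg:
  assumes "0 < x" "x < 1"
  shows "0 \<le> euler_integrand x"
proof -
  have "1 - x \<le> - ln x" using ln_le_minus_one[of x] assms by simp
  then have "1 / (- ln x) \<le> 1 / (1 - x)"
    using assms by (intro divide_left_mono) (auto simp: mult_neg_pos)
  then show ?thesis by (simp add: euler_integrand_def)
qed

lemma has_integral_power_01:
  "((\<lambda>x. x ^ j) has_integral 1 / (real j + 1)) {0<..<1::real}"
proof -
  have "((\<lambda>x. x powr real j) has_integral 1 / (real j + 1)) {0..1}"
    using has_integral_powr_from_0[of "real j" 1] by simp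
  then have "((\<lambda>x. x powr real j) has_integral 1 / (real j + 1)) {0<..<1}"
    by (simp add: has_integral_Icc_iff_Ioo)
  then show ?thesis
    by (rule has_integral_eq[rotated]) (auto simp: powr_realpow)
qed

lemma has_integral_geometric_sum_01:
  "((\<lambda>x. (1 - x ^ N) / (1 - x)) has_integral harm N) {0<..<1::real}"
proof -
  have "((\<lambda>x. \<Sum>j<N. x ^ j) has_integral (\<Sum>j<N. 1 / (real j + 1))) {0<..<1::real}"
    by (intro has_integral_sum has_integral_power_01) auto
  moreover have "(\<Sum>j<N. 1 / (real j + 1)) = harm N"
    by (simp add: harm_altdef field_simps)
  ultimately have "((\<lambda>x. \<Sum>j<N. x ^ j) has_integral harm N) {0<..<1::real}" by simp
  then show ?thesis
    by (rule has_integral_eq[rotated]) (auto simp: sum_gp_strict)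
qed

lemma euler_mascheroni_LIMSEQ_ln_Suc:
  "(\<lambda>N. harm N - ln (real N + 1)) \<longlonglongrightarrow> (euler_mascheroni :: real)"
proof -
  have "(\<lambda>N. (harm (Suc N) - ln (real (Suc N))) - inverse (real (Suc N))) \<longlonglongrightarrow> euler_mascheroni - 0"
    using LIMSEQ_Suc[OF euler_mascheroni_LIMSEQ] LIMSEQ_inverse_real_of_nat
    by (intro tendsto_diff) simp_all
  then show ?thesis by (simp add: harm_Suc add.commute)
qed

lemma has_integral_euler_integrand: "(euler_integrand has_integral euler_mascheroni) {0<..<1}"
proof (rule has_integral_monotone_convergence_increasing)
  let ?f = "\<lambda>N (x::real). (1 - x ^ N) / (1 - x) - (1 - x ^ N) / (- ln x)"
  have f_eq: "?f N x = (1 - x ^ N) * euler_integrand x" for N x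
    by (simp add: euler_integrand_def field_simps)
  show "(?f N has_integral (harm N - ln (real N + 1))) {0<..<1}" for N
    by (intro has_integral_diff has_integral_geometric_sum_01 has_integral_one_minus_power_div_ln)
  show "?f k x \<le> ?f (Suc k) x" if "x \<in> {0<..<1}" for k x
    unfolding f_eq using euler_integrand_nonneg[of x] power_decreasing[of k "Suc k" x] that
    by (intro mult_right_mono) auto
  show "(\<lambda>k. ?f k x) \<longlonglongrightarrow> euler_integrand x" if "x \<in> {0<..<1}" for x
  proof -
    have "(\<lambda>N. (1 - x ^ N) * euler_integrand x) \<longlonglongrightarrow> (1 - 0) * euler_integrand x"
      using that by (intro tendsto_intros LIMSEQ_power_zero) auto
    then show ?thesis unfolding f_eq by simp
  qed
qed (rule euler_mascheroni_LIMSEQ_ln_Suc)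

lemma alternating_binomial_sum_one_minus_power:
  fixes x :: "'a::comm_ring_1"
  assumes "n \<ge> 1"
  shows "(\<Sum>k=0..n. (-1) ^ (k+1) * of_nat (n choose k) * (1 - x ^ k)) = (1 - x) ^ n"
proof -
  have "(\<Sum>k=0..n. (-1) ^ (k+1) * of_nat (n choose k) * (1 - x ^ k))
      = (\<Sum>k=0..n. of_nat (n choose k) * (- x) ^ k * 1 ^ (n - k)) - (\<Sum>k=0..n. (-1) ^ k * of_nat (n choose k))"
    by (simp add: sum_subtractf[symmetric] algebra_simps power_minus[of x])
  also have "(\<Sum>k=0..n. (-1) ^ k * of_nat (n choose k) :: 'a) = 0"
    using choose_alternating_sum[of n] assms by (simp add: atLeast0AtMost)
  also have "(\<Sum>k=0..n. of_nat (n choose k) * (- x) ^ k * 1 ^ (n - k)) = (1 - x) ^ n"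
    using binomial_ring[of "-x" 1 n] by (simp add: atLeast0AtMost)
  finally show ?thesis by simp
qed
lemma has_integral_power_one_minus_div_ln:
  assumes "n \<ge> 1"
  shows "((\<lambda>x. (1 - x) ^ n / (- ln x)) has_integral
           (\<Sum>k=0..n. (-1) ^ (k+1) * real (n choose k) * ln (real (k+1)))) {0<..<1}"
proof -
  have "((\<lambda>x. \<Sum>k=0..n. (-1) ^ (k+1) * real (n choose k) * ((1 - x ^ k) / (- ln x))) has_integral
           (\<Sum>k=0..n. (-1) ^ (k+1) * real (n choose k) * ln (real k + 1))) {0<..<1}"
    by (intro has_integral_sum has_integral_mult_right has_integral_one_minus_power_div_ln) auto
  moreover have "(\<Sum>k=0..n. (-1) ^ (k+1) * real (n choose k) * ((1 - x ^ k) / (- ln x)))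
                 = (1 - x) ^ n / (- ln x)" for x :: real
  proof -
    have "(\<Sum>k=0..n. (-1) ^ (k+1) * real (n choose k) * ((1 - x ^ k) / (- ln x)))
        = (\<Sum>k=0..n. (-1) ^ (k+1) * real (n choose k) * (1 - x ^ k)) / (- ln x)"
      by (simp only: times_divide_eq_right sum_divide_distrib)
    then show ?thesis
      by (simp only: alternating_binomial_sum_one_minus_power[OF assms])
  qed
  ultimately show ?thesis by (simp add: add.commute)
qed

lemma euler_integrand_sums:
  assumes "0 < x" "x < 1"
  shows "(\<lambda>n. 1 / real (n+2) * ((1 - x) ^ (n+1) / (- ln x))) sums euler_integrand x"
proof -
  define u where "u = 1 - x"
  have u: "0 < u" "u < 1" and neg_ln: "0 < - ln x" using assms by (auto simp: u_def)
  have "(\<lambda>n. - ((-(x - 1)) ^ n) / of_nat n) sums ln (1 + (x - 1))"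
    by (rule ln_series') (use assms in auto)
  then have "(\<lambda>n. u ^ n / real n) sums (- ln x)"
    using sums_minus by (fastforce simp: u_def)
  then have "(\<lambda>n. u ^ (n + 2) / real (n + 2)) sums (- ln x - u)"
    by (subst sums_iff_shift) (simp add: numeral_2_eq_2)
  then have "(\<lambda>n. u ^ (n + 2) / real (n + 2) / (u * (- ln x))) sums ((- ln x - u) / (u * (- ln x)))"
    by (rule sums_divide)
  moreover have "u ^ (n + 2) / real (n + 2) / (u * (- ln x)) = 1 / real (n+2) * (u ^ (n+1) / (- ln x))" for n
    using u by (simp add: numeral_2_eq_2)
  moreover have "(- ln x - u) / (u * (- ln x)) = euler_integrand x"
    using u neg_ln by (simp add: euler_integrand_def u_def field_simps)
  ultimately show ?thesis by (simp add: u_def)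
qed

lemma euler_mascheroni_binomial_sums:
  "(\<lambda>n. 1 / real (n+2) * (\<Sum>k=0..n+1. (-1) ^ (k+1) * real ((n+1) choose k) * ln (real (k+1))))
     sums euler_mascheroni"
proof (rule has_integral_sums_nonneg)
  show "((\<lambda>x. 1 / real (n+2) * ((1 - x) ^ (n+1) / (- ln x))) has_integral
          1 / real (n+2) * (\<Sum>k=0..n+1. (-1) ^ (k+1) * real ((n+1) choose k) * ln (real (k+1))))
          {0<..<1}" for n
    by (intro has_integral_mult_right has_integral_power_one_minus_div_ln) simp
  show "0 \<le> 1 / real (n+2) * ((1 - x) ^ (n+1) / (- ln x))" if "x \<in> {0<..<1}" for n x
    using that by (intro mult_nonneg_nonneg divide_nonneg_pos) auto
qed (use euler_integrand_sums has_integral_euler_integrand in auto)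

lemma binomial_product_powr_eq_exp:
  "(\<Prod>k=0..n. real (k+1) powr ((-1) ^ (k+1) * real (n choose k))) powr (1 / real (n+1))
   = exp (1 / real (n+1) * (\<Sum>k=0..n. (-1) ^ (k+1) * real (n choose k) * ln (real (k+1))))"
proof -
  have "(\<Prod>k=0..n. real (k+1) powr ((-1) ^ (k+1) * real (n choose k)))
        = (\<Prod>k=0..n. exp ((-1) ^ (k+1) * real (n choose k) * ln (real (k+1))))"
    by (intro prod.cong refl) (simp add: powr_def del: of_nat_Suc)
  also have "\<dots> = exp (\<Sum>k=0..n. (-1) ^ (k+1) * real (n choose k) * ln (real (k+1)))"
    by (simp add: exp_sum)
  finally show ?thesis by (simp add: powr_def)
qed

theorem mainTheorem1:
  shows "(\<lambda>N. \<Prod>n=1..N. (\<Prod>k=0..n. real (k+1) powr ((-1) ^ (k+1) * real (n choose k))) powr (1 / real (n+1)))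
           \<longlonglongrightarrow> exp euler_mascheroni
       \<and> (\<lambda>n. 1 / real (n+2) * (\<Sum>k=0..n+1. (-1) ^ (k+1) * real ((n+1) choose k) * ln (real (k+1))))
           sums euler_mascheroni"
proof
  define b where "b n = 1 / real (n+1) * (\<Sum>k=0..n. (-1) ^ (k+1) * real (n choose k) * ln (real (k+1)))"
    for n
  have "(\<Prod>n=1..N. (\<Prod>k=0..n. real (k+1) powr ((-1) ^ (k+1) * real (n choose k))) powr (1 / real (n+1)))
        = exp (\<Sum>n<N. b (Suc n))" for N
  proof -
    have "(\<Prod>n=1..N. (\<Prod>k=0..n. real (k+1) powr ((-1) ^ (k+1) * real (n choose k))) powr (1 / real (n+1)))
          = exp (\<Sum>n=1..N. b n)"
      unfolding b_def binomial_product_powr_eq_exp by (simp add: exp_sum)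
    also have "(\<Sum>n=1..N. b n) = (\<Sum>n<N. b (Suc n))"
      by (induction N) auto
    finally show ?thesis .
  qed
  moreover have "(\<lambda>n. b (Suc n)) sums euler_mascheroni"
    using euler_mascheroni_binomial_sums unfolding b_def by (simp add: add.commute)
  ultimately show "(\<lambda>N. \<Prod>n=1..N. (\<Prod>k=0..n. real (k+1) powr ((-1) ^ (k+1) * real (n choose k))) powr (1 / real (n+1)))
           \<longlonglongrightarrow> exp euler_mascheroni"
    unfolding sums_def by (simp add: tendsto_exp)
qed (rule euler_mascheroni_binomial_sums)

end
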